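(* There exists $C(d,\Lambda)<\infty$ such that, for every $m\in\mathbb N$ and $p\in\mathbb P_m$, there exists $q\in\mathbb P_{m+2}$ with $-\mathscr Aq=p$ in $\mathbb R^d$, $q(0)=0$, $\nabla q(0)=0$ and, for every $n\in\{0,\dots,m\}$, $$|\nabla^{n+2}q(0)|\le\sum_{k=n}^mC^k|\nabla^kp(0)|.$$
   Context: $d\ge1$, $\Lambda\ge1$; $\mathbf a$ measurable, $\mathbb Z^d$-periodic, with $|\xi|^2\le\xi\cdot\mathbf a(x)\xi$, $|\eta\cdot\mathbf a(x)\xi|\le\Lambda|\eta||\xi|$. Tensors: $\mathbb T_k$ symmetric $k$-tensors indexed by $|\alpha|=k$, $S:T:=\sum_{|\alpha|=k}\frac{k!}{\alpha!}S_\alpha T_\alpha$, $|T|:=(T:T)^{1/2}$, $\nabla^ku:=(\partial^\alpha u)_{|\alpha|=k}$; $\mathbb P_m$ polynomials of degree $\le m$. Homogenized tensors $\bar{\mathbf a}^{(k)}\in\mathbb T_k$ together with correctors $\phi^{(k)}$ ($\mathbb T_k$-valued, periodic, mean zero on $Q_1=(-\frac12,\frac12)^d$): $\phi^{(0)}:=1$, $\bar{\mathbf a}^{(1)}:=0$; inductively for $p$ of degree $m$ with top part $p_m$, $L_{m-1}[p]:=\nabla\cdot(\mathbf a\nabla\sum_{k<m}\phi^{(k)}:\nabla^kp)-\sum_{k=2}^{m-1}\bar{\mathbf a}^{(k)}:\nabla^kp$, $\bar{\mathbf a}^{(m)}:\nabla^mp:=\int_{Q_1}L_{m-1}[p_m]$,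 and $\phi^{(m)}:\nabla^mp$ is the periodic mean-zero solution of $\nabla\cdot\mathbf a\nabla(\phi^{(m)}:\nabla^mp)=\bar{\mathbf a}^{(m)}:\nabla^mp-L_{m-1}[p_m]$. They satisfy $|\bar{\mathbf a}^{(k)}|\le C^k$. $\bar{\mathbf a}:=\bar{\mathbf a}^{(2)}$ is the homogenized matrix (uniformly elliptic with the same constants). The higher-order homogenized operator is $\mathscr Au:=\sum_{n\ge2}\bar{\mathbf a}^{(n)}:\nabla^nu$ (a finite sum on polynomials). *)

theory Defs
  imports "HOL-Analysis.Analysis"
begin

text \<open>Multi-indices on the coordinate type 'n (dimension d = CARD('n)) are functions
  'n => nat. Polynomials in d real variables are represented by their (finitely supported)
  coefficient functions c, i.e. the polynomial sum over alpha of c alpha * x^alpha.\<close>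

definition mdeg :: "('n::finite \<Rightarrow> nat) \<Rightarrow> nat" where
  "mdeg \<alpha> = (\<Sum>i\<in>UNIV. \<alpha> i)"

definition mfact :: "('n::finite \<Rightarrow> nat) \<Rightarrow> real" where
  "mfact \<alpha> = (\<Prod>i\<in>UNIV. fact (\<alpha> i))"

definition unitmi :: "'n \<Rightarrow> ('n \<Rightarrow> nat)" where
  "unitmi i = (\<lambda>j. if j = i then 1 else 0)"

definition in_P :: "nat \<Rightarrow> (('n::finite \<Rightarrow> nat) \<Rightarrow> real) \<Rightarrow> bool" where
  "in_P m c \<longleftrightarrow> (\<forall>\<alpha>. m < mdeg \<alpha> \<longrightarrow> c \<alpha> = 0)"

definition peval :: "(('n::finite \<Rightarrow> nat) \<Rightarrow> real) \<Rightarrow> real^'n \<Rightarrow> real" where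
  "peval c x = (\<Sum>\<alpha>\<in>{\<alpha>. c \<alpha> \<noteq> 0}. c \<alpha> * (\<Prod>i\<in>UNIV. (x $ i) ^ \<alpha> i))"

text \<open>Partial derivative partial^alpha of a polynomial (coefficientwise:
  partial^alpha x^gamma = gamma!/(gamma-alpha)! x^(gamma-alpha)).\<close>
definition pderivm :: "('n::finite \<Rightarrow> nat) \<Rightarrow> (('n \<Rightarrow> nat) \<Rightarrow> real) \<Rightarrow> (('n \<Rightarrow> nat) \<Rightarrow> real)" where
  "pderivm \<alpha> c = (\<lambda>\<beta>. c (\<lambda>i. \<beta> i + \<alpha> i) * (mfact (\<lambda>i. \<beta> i + \<alpha> i) / mfact \<beta>))"

text \<open>Symmetric k-tensors are functions on multi-indices; only entries with |alpha| = k matter.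
  Contraction S:T and norm |T|.\<close>
definition tcontr :: "nat \<Rightarrow> (('n::finite \<Rightarrow> nat) \<Rightarrow> real) \<Rightarrow> (('n \<Rightarrow> nat) \<Rightarrow> real) \<Rightarrow> real" where
  "tcontr k S T = (\<Sum>\<alpha>\<in>{\<alpha>. mdeg \<alpha> = k}. (fact k / mfact \<alpha>) * S \<alpha> * T \<alpha>)"

definition tnorm :: "nat \<Rightarrow> (('n::finite \<Rightarrow> nat) \<Rightarrow> real) \<Rightarrow> real" where
  "tnorm k T = sqrt (tcontr k T T)"

definition grad_at :: "nat \<Rightarrow> (('n::finite \<Rightarrow> nat) \<Rightarrow> real) \<Rightarrow> real^'n \<Rightarrow> (('n \<Rightarrow> nat) \<Rightarrow> real)" where
  "grad_at k c x = (\<lambda>\<alpha>. if mdeg \<alpha> = k then peval (pderivm \<alpha> c) x else 0)"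

text \<open>Higher-order homogenized operator  A u = sum_{n>=2} abar^(n) : nabla^n u, applied to a
  polynomial u (coefficient function); the sum is finite on polynomials since only
  multi-indices alpha with u(beta+alpha) nonzero contribute to the coefficient at beta.\<close>
definition hom_op :: "(nat \<Rightarrow> ('n::finite \<Rightarrow> nat) \<Rightarrow> real) \<Rightarrow> (('n \<Rightarrow> nat) \<Rightarrow> real) \<Rightarrow> (('n \<Rightarrow> nat) \<Rightarrow> real)" where
  "hom_op abar u = (\<lambda>\<beta>. \<Sum>\<alpha>\<in>{\<alpha>. 2 \<le> mdeg \<alpha> \<and> u (\<lambda>i. \<beta> i + \<alpha> i) \<noteq> 0}.
      (fact (mdeg \<alpha>) / mfact \<alpha>) * abar (mdeg \<alpha>) \<alpha> * pderivm \<alpha> u \<beta>)"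

text \<open>The matrix M_ij of a symmetric 2-tensor: abar^(2) : nabla^2 u = sum_ij M_ij d_i d_j u.\<close>
definition tmat :: "(('n::finite \<Rightarrow> nat) \<Rightarrow> real) \<Rightarrow> 'n \<Rightarrow> 'n \<Rightarrow> real" where
  "tmat T i j = T (\<lambda>l. unitmi i l + unitmi j l)"

definition bilin :: "('n::finite \<Rightarrow> 'n \<Rightarrow> real) \<Rightarrow> real^'n \<Rightarrow> real^'n \<Rightarrow> real" where
  "bilin M \<eta> \<xi> = (\<Sum>i\<in>UNIV. \<Sum>j\<in>UNIV. \<eta> $ i * M i j * \<xi> $ j)"

definition unif_elliptic :: "real \<Rightarrow> ('n::finite \<Rightarrow> 'n \<Rightarrow> real) \<Rightarrow> bool" where
  "unif_elliptic \<Lambda> M \<longleftrightarrow>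
     (\<forall>\<xi>. norm \<xi> ^ 2 \<le> bilin M \<xi> \<xi>) \<and> (\<forall>\<eta> \<xi>. \<bar>bilin M \<eta> \<xi>\<bar> \<le> \<Lambda> * norm \<eta> * norm \<xi>)"

end

theory Submission
  imports Defs
begin

text \<open>Fix a coordinate direction i. Ellipticity gives a_ii \<ge> 1 for a = abar^(2), so the
  equation -A q = p, read coefficientwise for the derivatives c_\<gamma> = \<partial>^\<gamma> q(0), can be solved
  for c_\<gamma> with \<gamma>_i \<ge> 2 in terms of \<partial>^(\<gamma>-2e_i) p(0) and of coefficients c_\<delta> of higher
  degree, or of the same degree with smaller i-th component. This defines q by well-founded
  recursion (all other c_\<gamma> vanish, whence q(0) = 0 and \<nabla>q(0) = 0). Along the same recursion,
  |c_\<gamma>| \<le> \<Sum>_k W^(2(k+2-|\<gamma>|) + \<gamma>_i - 2) |\<nabla>^k p(0)|, where W = (8(dK+1))^3 is so large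
  that the contributions of all terms abar^(n), |abar^(n)| \<le> K^n, add up to a quarter of the
  bound. Summing over the entries of \<nabla>^(n+2) q(0) costs a further factor d^(n+2).\<close>

lemma mdeg_ge_component: "\<alpha> i \<le> mdeg (\<alpha>::'n::finite \<Rightarrow> nat)"
  unfolding mdeg_def by (rule member_le_sum) auto

lemma mdeg_add: "mdeg (\<lambda>j. \<alpha> j + \<beta> j) = mdeg \<alpha> + mdeg (\<beta>::'n::finite \<Rightarrow> nat)"
  by (simp add: mdeg_def sum.distrib)

lemma mdeg_unitmi: "mdeg (unitmi i :: 'n::finite \<Rightarrow> nat) = 1"
  unfolding mdeg_def unitmi_def by simp

lemma finite_mdeg_le: "finite {\<alpha>::'n::finite \<Rightarrow> nat. mdeg \<alpha> \<le> N}"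
proof -
  have "{\<alpha>::'n \<Rightarrow> nat. mdeg \<alpha> \<le> N}
          \<subseteq> {f. \<forall>x. (x \<in> UNIV \<longrightarrow> f x \<in> {..N}) \<and> (x \<notin> UNIV \<longrightarrow> f x = 0)}"
    using mdeg_ge_component order_trans by fastforce
  moreover have "finite {f::'n \<Rightarrow> nat. \<forall>x. (x \<in> UNIV \<longrightarrow> f x \<in> {..N}) \<and> (x \<notin> UNIV \<longrightarrow> f x = 0)}"
    by (rule finite_set_of_finite_funs) auto
  ultimately show ?thesis by (rule finite_subset)
qed

lemma finite_mdeg_eq: "finite {\<alpha>::'n::finite \<Rightarrow> nat. mdeg \<alpha> = N}"
  by (rule finite_subset[OF _ finite_mdeg_le[of N]]) auto

lemma finite_mdeg_between: "finite {\<alpha>::'n::finite \<Rightarrow> nat. a \<le> mdeg \<alpha> \<and> mdeg \<alpha> \<le> b}"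
  by (rule finite_subset[OF _ finite_mdeg_le[of b]]) auto

lemma fact_mult_le_fact_add: "fact a * fact b \<le> (fact (a + b) :: real)"
proof -
  have "fact a * fact b * real (a + b choose a) = fact (a + b)"
    using binomial_fact_lemma[of a "a + b"]
    by (metis add_diff_cancel_left' le_add1 of_nat_fact of_nat_mult)
  moreover have "real (a + b choose a) \<ge> 1" by (simp add: Suc_leI)
  ultimately show ?thesis by (metis fact_ge_zero mult_left_mono mult.right_neutral mult_nonneg_nonneg)
qed

lemma prod_fact_le_fact_sum:
  "finite S \<Longrightarrow> (\<Prod>i\<in>S. fact (\<alpha> i)) \<le> (fact (\<Sum>i\<in>S. \<alpha> i) :: real)"
proof (induction S rule: finite_induct)
  case (insert x F)
  have "(\<Prod>i\<in>insert x F. fact (\<alpha> i)) = fact (\<alpha> x) * (\<Prod>i\<in>F. fact (\<alpha> i) :: real)"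
    using insert by simp
  also have "\<dots> \<le> fact (\<alpha> x) * fact (\<Sum>i\<in>F. \<alpha> i)"
    using insert by (intro mult_left_mono) auto
  also have "\<dots> \<le> fact (\<alpha> x + (\<Sum>i\<in>F. \<alpha> i))" by (rule fact_mult_le_fact_add)
  finally show ?case using insert by simp
qed simp

lemma mfact_pos: "mfact \<alpha> > 0"
  unfolding mfact_def by (intro prod_pos) auto

lemma mfact_nonzero [simp]: "mfact \<alpha> \<noteq> 0"
  using mfact_pos[of \<alpha>] by simp

lemma mfact_zero: "mfact (\<lambda>_::'n::finite. 0) = 1"
  by (simp add: mfact_def)

lemma mfact_add_unitmi:
  "mfact (\<lambda>j. \<delta> j + unitmi i j) = real (\<delta> i + 1) * mfact (\<delta>::'n::finite \<Rightarrow> nat)"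
proof -
  have "mfact (\<lambda>j. \<delta> j + unitmi i j) = fact (\<delta> i + 1) * (\<Prod>j\<in>UNIV-{i}. fact (\<delta> j + unitmi i j))"
    unfolding mfact_def by (subst prod.remove[of UNIV i]) (auto simp: unitmi_def)
  also have "(\<Prod>j\<in>UNIV-{i}. fact (\<delta> j + unitmi i j)) = (\<Prod>j\<in>UNIV-{i}. fact (\<delta> j) :: real)"
    by (rule prod.cong) (auto simp: unitmi_def)
  also have "mfact \<delta> = fact (\<delta> i) * (\<Prod>j\<in>UNIV-{i}. fact (\<delta> j))"
    unfolding mfact_def by (subst prod.remove[of UNIV i]) auto
  ultimately show ?thesis by (simp add: algebra_simps)
qed

definition mweight :: "('n::finite \<Rightarrow> nat) \<Rightarrow> real" where
  "mweight \<alpha> = fact (mdeg \<alpha>) / mfact \<alpha>"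

lemma mweight_ge_one: "1 \<le> mweight \<alpha>"
proof -
  have "mfact \<alpha> \<le> fact (mdeg \<alpha>)"
    unfolding mfact_def mdeg_def by (rule prod_fact_le_fact_sum) simp
  then show ?thesis using mfact_pos[of \<alpha>] by (simp add: mweight_def)
qed

lemma mweight_nonneg: "0 \<le> mweight \<alpha>"
  using mweight_ge_one[of \<alpha>] by simp

lemma sum_mdeg_Suc_component_eq:
  "(\<Sum>\<alpha>\<in>{\<alpha>::'n::finite \<Rightarrow> nat. mdeg \<alpha> = Suc s}. real (\<alpha> i) * fact s / mfact \<alpha>)
     = (\<Sum>\<delta>\<in>{\<delta>::'n \<Rightarrow> nat. mdeg \<delta> = s}. mweight \<delta>)"
proof -
  let ?S = "{\<alpha>::'n \<Rightarrow> nat. mdeg \<alpha> = Suc s}" and ?T = "{\<delta>::'n \<Rightarrow> nat. mdeg \<delta> = s}"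
  let ?f = "\<lambda>\<delta>::'n \<Rightarrow> nat. \<lambda>j. \<delta> j + unitmi i j"
  have inj: "inj_on ?f ?T" by (auto simp: inj_on_def fun_eq_iff)
  have img: "?f ` ?T = {\<alpha>\<in>?S. \<alpha> i \<noteq> 0}"
  proof
    show "?f ` ?T \<subseteq> {\<alpha>\<in>?S. \<alpha> i \<noteq> 0}"
      using mdeg_add[of _ "unitmi i"] mdeg_unitmi[of i] by (auto simp: unitmi_def)
  next
    show "{\<alpha>\<in>?S. \<alpha> i \<noteq> 0} \<subseteq> ?f ` ?T"
    proof
      fix \<alpha> assume \<alpha>: "\<alpha> \<in> {\<alpha>\<in>?S. \<alpha> i \<noteq> 0}"
      let ?\<delta> = "\<lambda>j. \<alpha> j - unitmi i j"
      have e: "\<alpha> = ?f ?\<delta>" using \<alpha> by (auto simp: fun_eq_iff unitmi_def)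
      then have "mdeg \<alpha> = mdeg ?\<delta> + 1" using mdeg_add[of ?\<delta> "unitmi i"] mdeg_unitmi[of i] by metis
      then have "?\<delta> \<in> ?T" using \<alpha> by simp
      then show "\<alpha> \<in> ?f ` ?T" by (rule image_eqI[where f = ?f, OF e])
    qed
  qed
  have "(\<Sum>\<alpha>\<in>?S. real (\<alpha> i) * fact s / mfact \<alpha>)
      = (\<Sum>\<alpha>\<in>{\<alpha>\<in>?S. \<alpha> i \<noteq> 0}. real (\<alpha> i) * fact s / mfact \<alpha>)"
    using finite_mdeg_eq by (intro sum.mono_neutral_right) auto
  also have "\<dots> = (\<Sum>\<delta>\<in>?T. real (?f \<delta> i) * fact s / mfact (?f \<delta>))"
    by (subst img[symmetric], rule sum.reindex[OF inj, unfolded comp_def])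
  also have "\<dots> = (\<Sum>\<delta>\<in>?T. mweight \<delta>)"
  proof (rule sum.cong[OF refl])
    fix \<delta> assume "\<delta> \<in> ?T"
    then show "real (?f \<delta> i) * fact s / mfact (?f \<delta>) = mweight \<delta>"
      unfolding mfact_add_unitmi using mfact_pos[of \<delta>]
      by (simp add: unitmi_def mweight_def divide_simps del: of_nat_Suc)
  qed
  finally show ?thesis .
qed

text \<open>The multinomial theorem evaluated at (1, ..., 1).\<close>
lemma sum_mweight_mdeg_eq:
  "(\<Sum>\<alpha>\<in>{\<alpha>::'n::finite \<Rightarrow> nat. mdeg \<alpha> = s}. mweight \<alpha>) = real CARD('n) ^ s"
proof (induction s)
  case 0
  have "{\<alpha>::'n \<Rightarrow> nat. mdeg \<alpha> = 0} = {\<lambda>_. 0}"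
    unfolding mdeg_def by (auto simp: fun_eq_iff)
  then show ?case by (simp add: mweight_def mfact_zero mdeg_def)
next
  case (Suc s)
  let ?S = "{\<alpha>::'n \<Rightarrow> nat. mdeg \<alpha> = Suc s}"
  have "(\<Sum>\<alpha>\<in>?S. mweight \<alpha>) = (\<Sum>\<alpha>\<in>?S. \<Sum>i\<in>UNIV. real (\<alpha> i) * fact s / mfact \<alpha>)"
  proof (rule sum.cong)
    fix \<alpha> assume "\<alpha> \<in> ?S"
    then have "(\<Sum>i\<in>UNIV. real (\<alpha> i)) = real (Suc s)"
      unfolding mdeg_def by (simp flip: of_nat_sum)
    then show "mweight \<alpha> = (\<Sum>i\<in>UNIV. real (\<alpha> i) * fact s / mfact \<alpha>)"
      using \<open>\<alpha> \<in> ?S\<close> by (simp add: mweight_def fact_Suc flip: sum_divide_distrib sum_distrib_right)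
  qed simp
  also have "\<dots> = (\<Sum>i\<in>UNIV. \<Sum>\<alpha>\<in>?S. real (\<alpha> i) * fact s / mfact \<alpha>)"
    by (rule sum.swap)
  also have "\<dots> = real CARD('n) * real CARD('n) ^ s"
    by (simp add: sum_mdeg_Suc_component_eq Suc.IH)
  finally show ?case by simp
qed

lemma sum_mweight_by_mdeg:
  "(\<Sum>\<alpha>\<in>{\<alpha>::'n::finite \<Rightarrow> nat. a \<le> mdeg \<alpha> \<and> mdeg \<alpha> \<le> b}. mweight \<alpha> * g (mdeg \<alpha>))
     = (\<Sum>n=a..b. real CARD('n) ^ n * g n)"
proof -
  let ?S = "{\<alpha>::'n \<Rightarrow> nat. a \<le> mdeg \<alpha> \<and> mdeg \<alpha> \<le> b}"
  have "(\<Sum>\<alpha>\<in>?S. mweight \<alpha> * g (mdeg \<alpha>))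
      = (\<Sum>n\<in>{a..b}. \<Sum>\<alpha>\<in>{\<alpha>\<in>?S. mdeg \<alpha> = n}. mweight \<alpha> * g (mdeg \<alpha>))"
    using finite_mdeg_between by (intro sum.group[symmetric]) auto
  also have "\<dots> = (\<Sum>n=a..b. real CARD('n) ^ n * g n)"
  proof (rule sum.cong[OF refl])
    fix n assume "n \<in> {a..b}"
    then have "{\<alpha>\<in>?S. mdeg \<alpha> = n} = {\<alpha>. mdeg \<alpha> = n}" by auto
    then show "(\<Sum>\<alpha>\<in>{\<alpha>\<in>?S. mdeg \<alpha> = n}. mweight \<alpha> * g (mdeg \<alpha>)) = real CARD('n) ^ n * g n"
      by (simp add: sum_mweight_mdeg_eq flip: sum_distrib_right)
  qed
  finally show ?thesis .
qed

lemma tcontr_eq_mweight: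
  "tcontr k S T = (\<Sum>\<alpha>\<in>{\<alpha>. mdeg \<alpha> = k}. mweight \<alpha> * S \<alpha> * T \<alpha>)"
  unfolding tcontr_def mweight_def by (rule sum.cong) auto

lemma tnorm_nonneg: "0 \<le> tnorm k T"
  unfolding tnorm_def tcontr_eq_mweight
  by (intro real_sqrt_ge_zero sum_nonneg) (simp add: mweight_nonneg mult.assoc)

lemma abs_le_tnorm:
  assumes "mdeg \<alpha> = k"
  shows "\<bar>T \<alpha>\<bar> \<le> tnorm k (T :: ('n::finite \<Rightarrow> nat) \<Rightarrow> real)"
proof -
  have "1 * (T \<alpha>)\<^sup>2 \<le> mweight \<alpha> * (T \<alpha>)\<^sup>2"
    by (rule mult_right_mono[OF mweight_ge_one]) simp
  also have "\<dots> = mweight \<alpha> * T \<alpha> * T \<alpha>"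
    by (simp add: power2_eq_square)
  also have "\<dots> \<le> tcontr k T T"
    unfolding tcontr_eq_mweight using assms finite_mdeg_eq[of k]
    by (intro member_le_sum) (auto simp: mweight_nonneg mult.assoc)
  finally show ?thesis unfolding tnorm_def using real_le_rsqrt by simp
qed

lemma tnorm_le_entry_bound:
  assumes entries: "\<And>\<alpha>. mdeg \<alpha> = k \<Longrightarrow> \<bar>T \<alpha>\<bar> \<le> B" and "0 \<le> B"
  shows "tnorm k (T :: ('n::finite \<Rightarrow> nat) \<Rightarrow> real) \<le> real CARD('n) ^ k * B"
proof -
  let ?d = "real CARD('n)"
  have "tcontr k T T \<le> (\<Sum>\<alpha>\<in>{\<alpha>::'n \<Rightarrow> nat. mdeg \<alpha> = k}. mweight \<alpha> * B\<^sup>2)"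
    unfolding tcontr_eq_mweight
  proof (intro sum_mono)
    fix \<alpha> assume "\<alpha> \<in> {\<alpha>::'n \<Rightarrow> nat. mdeg \<alpha> = k}"
    then have "T \<alpha> * T \<alpha> \<le> B\<^sup>2"
      using power_mono[OF entries abs_ge_zero, of \<alpha> 2] by (simp add: power2_eq_square)
    then show "mweight \<alpha> * T \<alpha> * T \<alpha> \<le> mweight \<alpha> * B\<^sup>2"
      using mweight_nonneg[of \<alpha>] by (simp add: mult.assoc mult_left_mono)
  qed
  also have "\<dots> = ?d ^ k * B\<^sup>2"
    by (simp add: sum_mweight_mdeg_eq flip: sum_distrib_right)
  also have "\<dots> \<le> (?d ^ k * B)\<^sup>2"
    using mult_right_mono[OF one_le_power[of ?d k], of "?d ^ k * B\<^sup>2"] \<open>0 \<le> B\<close>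
    by (simp add: power2_eq_square Suc_leI algebra_simps)
  finally show ?thesis
    unfolding tnorm_def using \<open>0 \<le> B\<close> by (simp add: real_sqrt_le_iff real_le_lsqrt)
qed

lemma tnorm_single_entry:
  assumes "mdeg \<alpha>\<^sub>0 = k" and others: "\<And>\<alpha>. mdeg \<alpha> = k \<Longrightarrow> \<alpha> \<noteq> \<alpha>\<^sub>0 \<Longrightarrow> T \<alpha> = 0"
  shows "tnorm k (T :: ('n::finite \<Rightarrow> nat) \<Rightarrow> real) = sqrt (mweight \<alpha>\<^sub>0) * \<bar>T \<alpha>\<^sub>0\<bar>"
proof -
  have "tcontr k T T = (\<Sum>\<alpha>\<in>{\<alpha>::'n \<Rightarrow> nat. mdeg \<alpha> = k}. if \<alpha> = \<alpha>\<^sub>0 then mweight \<alpha>\<^sub>0 * (T \<alpha>\<^sub>0)\<^sup>2 else 0)"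
    unfolding tcontr_eq_mweight using others by (intro sum.cong) (auto simp: power2_eq_square)
  also have "\<dots> = mweight \<alpha>\<^sub>0 * (T \<alpha>\<^sub>0)\<^sup>2"
    using assms(1) by (subst sum.delta[OF finite_mdeg_eq]) simp
  finally show ?thesis
    unfolding tnorm_def by (simp add: real_sqrt_mult)
qed

lemma finite_support_if_in_P: "in_P N c \<Longrightarrow> finite {\<beta>. c \<beta> \<noteq> 0}"
  unfolding in_P_def by (rule finite_subset[OF _ finite_mdeg_le[of N]]) (auto simp: not_less)

lemma in_P_pderivm: "in_P N c \<Longrightarrow> in_P N (pderivm \<alpha> c)"
  unfolding in_P_def pderivm_def by (simp add: mdeg_add)

lemma peval_zero:
  assumes "finite {\<beta>. c \<beta> \<noteq> 0}"
  shows "peval c 0 = c (\<lambda>_. 0)"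
proof -
  have monomial: "(\<Prod>i\<in>UNIV. (0::real^'n) $ i ^ \<alpha> i) = (if \<alpha> = (\<lambda>_. 0) then 1 else 0)"
    for \<alpha> :: "'n::finite \<Rightarrow> nat"
  proof (cases "\<alpha> = (\<lambda>_. 0)")
    case False
    then obtain j where "\<alpha> j \<noteq> 0" by auto
    then show ?thesis using False by (intro prod_zero[THEN trans]) (auto intro!: bexI[of _ j])
  qed simp
  have "peval c 0 = (\<Sum>\<alpha>\<in>{\<beta>. c \<beta> \<noteq> 0}. if \<alpha> = (\<lambda>_. 0) then c \<alpha> else 0)"
    unfolding peval_def monomial by (rule sum.cong) auto
  also have "\<dots> = c (\<lambda>_. 0)"
    using assms by (auto simp: sum.delta')
  finally show ?thesis .
qed

lemma grad_at_zero:
  assumes "in_P N c"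
  shows "grad_at k c 0 \<alpha> = (if mdeg \<alpha> = k then c \<alpha> * mfact \<alpha> else 0)"
  using peval_zero[OF finite_support_if_in_P[OF in_P_pderivm[OF assms]], of \<alpha>]
  by (simp add: grad_at_def pderivm_def mfact_zero)

lemma peval_uminus: "peval (\<lambda>\<beta>. - c \<beta>) x = - peval c x"
  unfolding peval_def by (simp add: sum_negf)

definition unit2 :: "'n \<Rightarrow> 'n \<Rightarrow> nat" where
  "unit2 i = (\<lambda>j. unitmi i j + unitmi i j)"

definition pivot_shift :: "'n \<Rightarrow> ('n \<Rightarrow> nat) \<Rightarrow> ('n \<Rightarrow> nat) \<Rightarrow> 'n \<Rightarrow> nat" where
  "pivot_shift i \<gamma> \<alpha> = (\<lambda>j. \<gamma> j - unit2 i j + \<alpha> j)"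

definition coupled_indices :: "'n::finite \<Rightarrow> nat \<Rightarrow> ('n \<Rightarrow> nat) \<Rightarrow> ('n \<Rightarrow> nat) set" where
  "coupled_indices i m \<gamma> = {\<alpha>. 2 \<le> mdeg \<alpha> \<and> mdeg \<alpha> \<le> m + 2 \<and> \<alpha> \<noteq> unit2 i
      \<and> mdeg (pivot_shift i \<gamma> \<alpha>) \<le> m + 2 \<and> 2 \<le> pivot_shift i \<gamma> \<alpha> i}"

definition deriv_at_zero :: "(('n::finite \<Rightarrow> nat) \<Rightarrow> real) \<Rightarrow> ('n \<Rightarrow> nat) \<Rightarrow> real" where
  "deriv_at_zero p \<beta> = p \<beta> * mfact \<beta>"

text \<open>The unknowns are the derivatives c_\<gamma> = \<gamma>! q_\<gamma> of q at 0. The coefficient of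
  x^\<beta>/\<beta>! in -A q = p reads  \<Sum>_\<alpha> mweight \<alpha> a_\<alpha> c_(\<beta>+\<alpha>) = - \<partial>^\<beta> p(0),  whose
  \<alpha> = 2e_i term is a_ii c_(\<beta>+2e_i); one step solves this for c_\<gamma>, \<gamma> = \<beta> + 2e_i.
  The coupled indices are the other \<alpha> for which c_(\<beta>+\<alpha>) may be nonzero; those
  coefficients have higher degree, or the same degree and a smaller i-th component.\<close>
definition solve_step ::
  "(nat \<Rightarrow> ('n::finite \<Rightarrow> nat) \<Rightarrow> real) \<Rightarrow> (('n \<Rightarrow> nat) \<Rightarrow> real) \<Rightarrow> nat \<Rightarrow> 'n
     \<Rightarrow> (('n \<Rightarrow> nat) \<Rightarrow> real) \<Rightarrow> ('n \<Rightarrow> nat) \<Rightarrow> real" where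
  "solve_step abar p m i c \<gamma> = (if 2 \<le> \<gamma> i \<and> mdeg \<gamma> \<le> m + 2 then
     (- deriv_at_zero p (\<lambda>j. \<gamma> j - unit2 i j)
      - (\<Sum>\<alpha>\<in>coupled_indices i m \<gamma>. mweight \<alpha> * abar (mdeg \<alpha>) \<alpha> * c (pivot_shift i \<gamma> \<alpha>)))
     / abar 2 (unit2 i)
   else 0)"

text \<open>Lexicographic in (m + 2 - mdeg \<gamma>, \<gamma> i), as \<gamma> i < m + 3 wherever the recursion is used.\<close>
definition solve_order :: "nat \<Rightarrow> 'n \<Rightarrow> ('n::finite \<Rightarrow> nat) \<Rightarrow> nat" where
  "solve_order m i \<gamma> = (m + 3 - mdeg \<gamma>) * (m + 3) + \<gamma> i"

definition solve_coeff ::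
  "(nat \<Rightarrow> ('n::finite \<Rightarrow> nat) \<Rightarrow> real) \<Rightarrow> (('n \<Rightarrow> nat) \<Rightarrow> real) \<Rightarrow> nat \<Rightarrow> 'n
     \<Rightarrow> ('n \<Rightarrow> nat) \<Rightarrow> real" where
  "solve_coeff abar p m i = wfrec (Wellfounded.measure (solve_order m i)) (solve_step abar p m i)"

definition solve_poly ::
  "(nat \<Rightarrow> ('n::finite \<Rightarrow> nat) \<Rightarrow> real) \<Rightarrow> (('n \<Rightarrow> nat) \<Rightarrow> real) \<Rightarrow> nat \<Rightarrow> 'n
     \<Rightarrow> ('n \<Rightarrow> nat) \<Rightarrow> real" where
  "solve_poly abar p m i = (\<lambda>\<gamma>. solve_coeff abar p m i \<gamma> / mfact \<gamma>)"

lemma unit2_same [simp]: "unit2 i i = 2"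
  by (simp add: unit2_def unitmi_def)

lemma unit2_other [simp]: "j \<noteq> i \<Longrightarrow> unit2 i j = 0"
  by (simp add: unit2_def unitmi_def)

lemma mdeg_unit2: "mdeg (unit2 (i::'n::finite)) = 2"
  unfolding unit2_def using mdeg_add[of "unitmi i" "unitmi i"] mdeg_unitmi[of i] by simp

lemma mweight_unit2: "mweight (unit2 (i::'n::finite)) = 1"
proof -
  have "mfact (unit2 i) = fact (unit2 i i) * (\<Prod>j\<in>UNIV-{i}. fact (unit2 i j))"
    unfolding mfact_def by (subst prod.remove[of UNIV i]) auto
  also have "(\<Prod>j\<in>UNIV-{i}. fact (unit2 i j) :: real) = 1"
    by (rule prod.neutral) auto
  finally show ?thesis by (simp add: mweight_def mdeg_unit2)
qed

lemma mdeg_sub_unit2: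
  assumes "2 \<le> \<gamma> i"
  shows "mdeg (\<lambda>j. \<gamma> j - unit2 i j) + 2 = mdeg (\<gamma>::'n::finite \<Rightarrow> nat)"
proof -
  have le: "\<forall>j. unit2 i j \<le> \<gamma> j" using assms by (metis unit2_same unit2_other zero_le)
  then have "mdeg (\<lambda>j. \<gamma> j - unit2 i j) = mdeg \<gamma> - mdeg (unit2 i)"
    unfolding mdeg_def by (simp add: sum_subtractf_nat)
  moreover have "mdeg (unit2 i) \<le> mdeg \<gamma>"
    using le unfolding mdeg_def by (simp add: sum_mono)
  ultimately show ?thesis using mdeg_unit2[of i] by simp
qed

lemma mdeg_pivot_shift:
  "2 \<le> \<gamma> i \<Longrightarrow> mdeg (pivot_shift i \<gamma> \<alpha>) + 2 = mdeg (\<gamma>::'n::finite \<Rightarrow> nat) + mdeg \<alpha>"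
  using mdeg_sub_unit2[where \<gamma> = \<gamma> and i = i] mdeg_add[of "\<lambda>j. \<gamma> j - unit2 i j" \<alpha>]
  unfolding pivot_shift_def by simp

lemma pivot_shift_same: "pivot_shift i \<gamma> \<alpha> i = \<gamma> i - 2 + \<alpha> i"
  by (simp add: pivot_shift_def)

lemma component_le_one_if_mdeg_two:
  assumes "mdeg \<alpha> = 2" "\<alpha> \<noteq> unit2 i"
  shows "\<alpha> (i::'n::finite) \<le> 1"
proof (rule ccontr)
  assume "\<not> \<alpha> i \<le> 1"
  then have \<alpha>i: "\<alpha> i = 2" using mdeg_ge_component[of \<alpha> i] assms by linarith
  have "mdeg \<alpha> = \<alpha> i + (\<Sum>j\<in>UNIV-{i}. \<alpha> j)"
    unfolding mdeg_def by (subst sum.remove[of UNIV i]) auto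
  then have "\<forall>j\<in>UNIV-{i}. \<alpha> j = 0" using \<alpha>i assms by simp
  then have "\<alpha> j = unit2 i j" for j using \<alpha>i by (cases "j = i") auto
  then show False using assms by auto
qed

lemma finite_coupled_indices: "finite (coupled_indices i m \<gamma>)"
  by (rule finite_subset[OF _ finite_mdeg_le[of "m + 2"]]) (auto simp: coupled_indices_def)

lemma solve_order_pivot_shift_less:
  assumes \<gamma>: "2 \<le> \<gamma> i" "mdeg \<gamma> \<le> m + 2" and \<alpha>: "\<alpha> \<in> coupled_indices i m \<gamma>"
  shows "solve_order m i (pivot_shift i \<gamma> \<alpha>) < solve_order m i (\<gamma>::'n::finite \<Rightarrow> nat)"
proof -
  let ?\<delta> = "pivot_shift i \<gamma> \<alpha>"
  have deg: "mdeg ?\<delta> + 2 = mdeg \<gamma> + mdeg \<alpha>" using mdeg_pivot_shift[where \<gamma> = \<gamma> and i = i, OF \<gamma>(1)] .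
  have \<alpha>': "2 \<le> mdeg \<alpha>" "\<alpha> \<noteq> unit2 i" "mdeg ?\<delta> \<le> m + 2"
    using \<alpha> by (auto simp: coupled_indices_def)
  show ?thesis
  proof (cases "mdeg \<alpha> = 2")
    case True
    then have "\<alpha> i \<le> 1" using component_le_one_if_mdeg_two \<alpha>' by blast
    then show ?thesis using deg True \<gamma> by (simp add: solve_order_def pivot_shift_same)
  next
    case False
    then have lt: "mdeg \<gamma> < mdeg ?\<delta>" using deg \<alpha>' by linarith
    define a where "a = m + 2 - mdeg \<gamma>"
    have \<delta>i: "?\<delta> i \<le> m + 2" using mdeg_ge_component[of ?\<delta> i] \<alpha>' by linarith
    have a: "m + 3 - mdeg \<gamma> = Suc a" "m + 3 - mdeg ?\<delta> \<le> a"
      using lt \<alpha>'(3) \<gamma>(2) unfolding a_def by linarith+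
    have "(m + 3 - mdeg ?\<delta>) * (m + 3) + ?\<delta> i \<le> a * (m + 3) + (m + 2)"
      using a \<delta>i by (intro add_mono mult_right_mono) auto
    also have "\<dots> < (m + 3 - mdeg \<gamma>) * (m + 3)" unfolding a by simp
    finally show ?thesis unfolding solve_order_def by linarith
  qed
qed

lemma solve_coeff_eq:
  "solve_coeff abar p m i \<gamma> = solve_step abar p m i (solve_coeff abar p m i) \<gamma>"
proof -
  let ?c = "solve_coeff abar p m i" and ?R = "Wellfounded.measure (solve_order m i)"
  have "?c \<gamma> = solve_step abar p m i (cut ?c ?R \<gamma>) \<gamma>"
    unfolding solve_coeff_def by (rule wfrec) simp
  also have "\<dots> = solve_step abar p m i ?c \<gamma>"
    unfolding solve_step_def
    by (auto intro!: sum.cong arg_cong2[where f = "(/)"] simp: cut_apply solve_order_pivot_shift_less)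
  finally show ?thesis .
qed

lemma solve_coeff_eq_zero:
  assumes "\<not> (2 \<le> \<gamma> i \<and> mdeg \<gamma> \<le> m + 2)"
  shows "solve_coeff abar p m i \<gamma> = 0"
  by (subst solve_coeff_eq) (simp only: solve_step_def if_not_P[OF assms])

lemma solve_coeff_pivot:
  assumes "2 \<le> \<gamma> i" "mdeg \<gamma> \<le> m + 2"
  shows "solve_coeff abar p m i \<gamma> =
     (- deriv_at_zero p (\<lambda>j. \<gamma> j - unit2 i j) - (\<Sum>\<alpha>\<in>coupled_indices i m \<gamma>.
        mweight \<alpha> * abar (mdeg \<alpha>) \<alpha> * solve_coeff abar p m i (pivot_shift i \<gamma> \<alpha>)))
     / abar 2 (unit2 i)"
  by (subst solve_coeff_eq) (use assms in \<open>simp add: solve_step_def\<close>)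

locale pivot_solver =
  fixes abar :: "nat \<Rightarrow> ('n::finite \<Rightarrow> nat) \<Rightarrow> real" and p :: "('n \<Rightarrow> nat) \<Rightarrow> real"
    and m :: nat and i :: 'n
  assumes p_in_P: "in_P m p" and pivot_nonzero: "abar 2 (unit2 i) \<noteq> 0"
begin

abbreviation coef :: "('n \<Rightarrow> nat) \<Rightarrow> real" where
  "coef \<equiv> solve_coeff abar p m i"

lemma coef_nonzero_imp: "coef \<gamma> \<noteq> 0 \<Longrightarrow> 2 \<le> \<gamma> i \<and> mdeg \<gamma> \<le> m + 2"
  using solve_coeff_eq_zero by blast

lemma solve_poly_in_P: "in_P (m + 2) (solve_poly abar p m i)"
  unfolding in_P_def solve_poly_def using coef_nonzero_imp by fastforce

lemma coefficient_equation:
  "(\<Sum>\<alpha>\<in>{\<alpha>. 2 \<le> mdeg \<alpha> \<and> solve_poly abar p m i (\<lambda>j. \<beta> j + \<alpha> j) \<noteq> 0}.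
      mweight \<alpha> * abar (mdeg \<alpha>) \<alpha> * coef (\<lambda>j. \<beta> j + \<alpha> j)) = - deriv_at_zero p \<beta>"
  (is "(\<Sum>\<alpha>\<in>?S. ?f \<alpha>) = _")
proof (cases "mdeg \<beta> \<le> m")
  case True
  let ?\<gamma> = "\<lambda>j. \<beta> j + unit2 i j"
  let ?A = "coupled_indices i m ?\<gamma>"
  have \<gamma>: "2 \<le> ?\<gamma> i" "mdeg ?\<gamma> \<le> m + 2"
    using True mdeg_add[of \<beta> "unit2 i"] mdeg_unit2[of i] by simp_all
  have shift: "pivot_shift i ?\<gamma> \<alpha> = (\<lambda>j. \<beta> j + \<alpha> j)" for \<alpha>
    by (simp add: pivot_shift_def)
  have "?S \<subseteq> insert (unit2 i) ?A"
  proof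
    fix \<alpha> assume "\<alpha> \<in> ?S"
    then have "2 \<le> mdeg \<alpha>" "coef (\<lambda>j. \<beta> j + \<alpha> j) \<noteq> 0" by (auto simp: solve_poly_def)
    with coef_nonzero_imp[of "\<lambda>j. \<beta> j + \<alpha> j"] mdeg_add[of \<beta> \<alpha>]
    show "\<alpha> \<in> insert (unit2 i) ?A" by (auto simp: coupled_indices_def shift)
  qed
  then have "(\<Sum>\<alpha>\<in>?S. ?f \<alpha>) = (\<Sum>\<alpha>\<in>insert (unit2 i) ?A. ?f \<alpha>)"
    using finite_coupled_indices mdeg_unit2[of i] mfact_pos
    by (intro sum.mono_neutral_left) (auto simp: coupled_indices_def solve_poly_def)
  also have "\<dots> = abar 2 (unit2 i) * coef ?\<gamma> + (\<Sum>\<alpha>\<in>?A. ?f \<alpha>)"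
    using finite_coupled_indices mweight_unit2[of i] mdeg_unit2[of i]
    by (subst sum.insert) (auto simp: coupled_indices_def)
  also have "\<dots> = - deriv_at_zero p \<beta>"
    using solve_coeff_pivot[OF \<gamma>, of abar p] pivot_nonzero by (simp add: shift)
  finally show ?thesis .
next
  case False
  have empty: "?S = {}"
    using coef_nonzero_imp False mdeg_add[of \<beta>] by (fastforce simp: solve_poly_def)
  have "p \<beta> = 0" using p_in_P False unfolding in_P_def by simp
  then show ?thesis unfolding empty by (simp add: deriv_at_zero_def)
qed

lemma hom_op_solve_poly: "hom_op abar (solve_poly abar p m i) = (\<lambda>\<beta>. - p \<beta>)"
proof
  fix \<beta>
  have "pderivm \<alpha> (solve_poly abar p m i) \<beta> = coef (\<lambda>j. \<beta> j + \<alpha> j) / mfact \<beta>" for \<alpha>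
    using mfact_pos[of "\<lambda>j. \<beta> j + \<alpha> j"] by (simp add: pderivm_def solve_poly_def)
  then have "hom_op abar (solve_poly abar p m i) \<beta>
      = (\<Sum>\<alpha>\<in>{\<alpha>. 2 \<le> mdeg \<alpha> \<and> solve_poly abar p m i (\<lambda>j. \<beta> j + \<alpha> j) \<noteq> 0}.
          mweight \<alpha> * abar (mdeg \<alpha>) \<alpha> * coef (\<lambda>j. \<beta> j + \<alpha> j)) / mfact \<beta>"
    unfolding hom_op_def sum_divide_distrib by (simp add: mweight_def)
  then show "hom_op abar (solve_poly abar p m i) \<beta> = - p \<beta>"
    unfolding coefficient_equation deriv_at_zero_def using mfact_pos[of \<beta>] by simp
qed

lemma peval_solve_poly_zero: "peval (solve_poly abar p m i) 0 = 0"
  using peval_zero[OF finite_support_if_in_P[OF solve_poly_in_P]]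
    solve_coeff_eq_zero[of "\<lambda>_. 0" i m abar p] by (simp add: solve_poly_def)

lemma grad_solve_poly: "grad_at k (solve_poly abar p m i) 0 \<alpha> = (if mdeg \<alpha> = k then coef \<alpha> else 0)"
  using grad_at_zero[OF solve_poly_in_P, of k \<alpha>] mfact_pos[of \<alpha>] by (simp add: solve_poly_def)

lemma pderivm_solve_poly_zero:
  assumes "mdeg \<alpha> = 1"
  shows "peval (pderivm \<alpha> (solve_poly abar p m i)) 0 = 0"
proof -
  have "\<alpha> i \<le> 1" using mdeg_ge_component[of \<alpha> i] assms by simp
  then have "coef \<alpha> = 0" by (intro solve_coeff_eq_zero) simp
  then show ?thesis using grad_solve_poly[of 1 \<alpha>] assms by (simp add: grad_at_def)
qed

end

text \<open>Each degree below |\<gamma>| costs W^2 and each unit of \<gamma>_i above 2 costs W; the tail from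
  mdeg \<gamma> - 1 on is what the coefficients of higher degree contribute.\<close>
definition majorant :: "real \<Rightarrow> (nat \<Rightarrow> real) \<Rightarrow> nat \<Rightarrow> 'n \<Rightarrow> ('n::finite \<Rightarrow> nat) \<Rightarrow> nat \<Rightarrow> real" where
  "majorant W P m i \<gamma> k\<^sub>0 = (\<Sum>k=k\<^sub>0..m. W ^ (2 * (k + 2 - mdeg \<gamma>) + (\<gamma> i - 2)) * P k)"

locale pivot_bounds = pivot_solver abar p m i
  for abar :: "nat \<Rightarrow> ('n::finite \<Rightarrow> nat) \<Rightarrow> real" and p m i +
  fixes K W :: real
  assumes pivot_ge_one: "1 \<le> abar 2 (unit2 i)"
    and abar_le: "\<And>\<alpha>. \<bar>abar (mdeg \<alpha>) \<alpha>\<bar> \<le> K ^ mdeg \<alpha>"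
    and K_nonneg: "0 \<le> K"
    and W_ge_two: "2 \<le> W"
    and W_absorbs_quadratic: "4 * (real CARD('n) * K)\<^sup>2 \<le> W"
    and W_absorbs_higher: "\<And>N. (\<Sum>n=3..N. (real CARD('n) * K) ^ n / W ^ (n - 2)) \<le> 1/4"
begin

abbreviation pnorm :: "nat \<Rightarrow> real" where
  "pnorm k \<equiv> tnorm k (grad_at k p 0)"

abbreviation bound :: "('n \<Rightarrow> nat) \<Rightarrow> nat \<Rightarrow> real" where
  "bound \<equiv> majorant W pnorm m i"

lemma bound_nonneg: "0 \<le> bound \<gamma> k\<^sub>0"
  unfolding majorant_def using W_ge_two by (intro sum_nonneg mult_nonneg_nonneg tnorm_nonneg) auto

lemma abs_deriv_at_zero_le: "\<bar>deriv_at_zero p \<beta>\<bar> \<le> pnorm (mdeg \<beta>)"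
  using abs_le_tnorm[of \<beta> "mdeg \<beta>" "grad_at (mdeg \<beta>) p 0"] grad_at_zero[OF p_in_P]
  by (simp add: deriv_at_zero_def)

lemma bound_split:
  assumes "2 \<le> mdeg \<gamma>" "mdeg \<gamma> \<le> m + 2"
  shows "bound \<gamma> (mdeg \<gamma> - 2) = W ^ (\<gamma> i - 2) * pnorm (mdeg \<gamma> - 2) + bound \<gamma> (mdeg \<gamma> - 1)"
proof -
  have split: "{mdeg \<gamma> - 2..m} = insert (mdeg \<gamma> - 2) {mdeg \<gamma> - 1..m}" using assms by auto
  show ?thesis unfolding majorant_def split using assms by (subst sum.insert) auto
qed

lemma bound_same_degree_le:
  assumes "mdeg \<delta> = mdeg \<gamma>" "2 \<le> \<delta> i" "\<delta> i < \<gamma> i"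
  shows "bound \<delta> (mdeg \<delta> - 2) * W \<le> bound \<gamma> (mdeg \<gamma> - 2)"
  unfolding majorant_def assms(1) sum_distrib_right
proof (rule sum_mono)
  fix k
  let ?e = "2 * (k + 2 - mdeg \<gamma>)"
  have "W ^ (?e + (\<delta> i - 2)) * W \<le> W ^ (?e + (\<gamma> i - 2))"
    using W_ge_two assms(2,3) by (subst power_Suc2[symmetric], intro power_increasing) auto
  from mult_right_mono[OF this tnorm_nonneg]
  show "W ^ (?e + (\<delta> i - 2)) * pnorm k * W \<le> W ^ (?e + (\<gamma> i - 2)) * pnorm k"
    by (simp only: mult_ac)
qed

lemma bound_higher_degree_le:
  assumes "3 \<le> n" "mdeg \<delta> + 2 = mdeg \<gamma> + n" "\<delta> i + 2 \<le> \<gamma> i + n" "2 \<le> \<gamma> i"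
  shows "bound \<delta> (mdeg \<delta> - 2) * W ^ (n - 2) \<le> bound \<gamma> (mdeg \<gamma> - 1)"
proof -
  have "bound \<delta> (mdeg \<delta> - 2) * W ^ (n - 2)
      = (\<Sum>k=mdeg \<delta> - 2..m. W ^ (2 * (k + 2 - mdeg \<delta>) + (\<delta> i - 2) + (n - 2)) * pnorm k)"
    unfolding majorant_def sum_distrib_right by (simp add: power_add mult_ac)
  also have "\<dots> \<le> (\<Sum>k=mdeg \<delta> - 2..m. W ^ (2 * (k + 2 - mdeg \<gamma>) + (\<gamma> i - 2)) * pnorm k)"
    using assms W_ge_two by (intro sum_mono mult_right_mono tnorm_nonneg power_increasing) auto
  also have "\<dots> \<le> bound \<gamma> (mdeg \<gamma> - 1)"
    unfolding majorant_def using assms W_ge_two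
    by (intro sum_mono2 mult_nonneg_nonneg tnorm_nonneg) auto
  finally show ?thesis .
qed

lemma same_degree_terms_le:
  fixes c :: "('n \<Rightarrow> nat) \<Rightarrow> real"
  assumes \<gamma>: "2 \<le> \<gamma> i"
    and IH: "\<And>\<alpha>. \<alpha> \<in> coupled_indices i m \<gamma> \<Longrightarrow>
      \<bar>c (pivot_shift i \<gamma> \<alpha>)\<bar> \<le> bound (pivot_shift i \<gamma> \<alpha>) (mdeg (pivot_shift i \<gamma> \<alpha>) - 2)"
  shows "(\<Sum>\<alpha>\<in>coupled_indices i m \<gamma> \<inter> {\<alpha>. mdeg \<alpha> = 2}.
           \<bar>mweight \<alpha> * abar (mdeg \<alpha>) \<alpha> * c (pivot_shift i \<gamma> \<alpha>)\<bar>)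
         \<le> (if \<gamma> i = 2 then 0 else bound \<gamma> (mdeg \<gamma> - 2) / 4)"
proof -
  let ?A = "coupled_indices i m \<gamma> \<inter> {\<alpha>. mdeg \<alpha> = 2}" and ?B = "bound \<gamma> (mdeg \<gamma> - 2)"
  have same_degree: "pivot_shift i \<gamma> \<alpha> i < \<gamma> i" "mdeg (pivot_shift i \<gamma> \<alpha>) = mdeg \<gamma>"
    "2 \<le> pivot_shift i \<gamma> \<alpha> i" if "\<alpha> \<in> ?A" for \<alpha>
    using that component_le_one_if_mdeg_two[of \<alpha> i] mdeg_pivot_shift[of \<gamma> i \<alpha>] \<gamma>
    by (auto simp: coupled_indices_def pivot_shift_same)
  show ?thesis
  proof (cases "\<gamma> i = 2")
    case True
    then have "?A = {}" using same_degree by fastforce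
    then show ?thesis using True by simp
  next
    case False
    have term_le: "\<bar>mweight \<alpha> * abar (mdeg \<alpha>) \<alpha> * c (pivot_shift i \<gamma> \<alpha>)\<bar> \<le> mweight \<alpha> * (K\<^sup>2 * (?B / W))"
      if "\<alpha> \<in> ?A" for \<alpha>
    proof -
      have "\<bar>c (pivot_shift i \<gamma> \<alpha>)\<bar> * W \<le> bound (pivot_shift i \<gamma> \<alpha>) (mdeg (pivot_shift i \<gamma> \<alpha>) - 2) * W"
        using IH that W_ge_two by (intro mult_right_mono) auto
      also have "\<dots> \<le> ?B"
        by (rule bound_same_degree_le[OF same_degree(2,3,1)[OF that]])
      finally have "\<bar>c (pivot_shift i \<gamma> \<alpha>)\<bar> \<le> ?B / W"
        using W_ge_two by (simp add: le_divide_eq)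
      moreover have "\<bar>abar (mdeg \<alpha>) \<alpha>\<bar> \<le> K\<^sup>2" using abar_le[of \<alpha>] that by simp
      ultimately have "\<bar>abar (mdeg \<alpha>) \<alpha>\<bar> * \<bar>c (pivot_shift i \<gamma> \<alpha>)\<bar> \<le> K\<^sup>2 * (?B / W)"
        by (intro mult_mono) auto
      from mult_left_mono[OF this mweight_nonneg] show ?thesis
        unfolding abs_mult abs_of_nonneg[OF mweight_nonneg] by (simp only: mult.assoc)
    qed
    have "(\<Sum>\<alpha>\<in>?A. \<bar>mweight \<alpha> * abar (mdeg \<alpha>) \<alpha> * c (pivot_shift i \<gamma> \<alpha>)\<bar>)
        \<le> (\<Sum>\<alpha>\<in>?A. mweight \<alpha> * (K\<^sup>2 * (?B / W)))"
      by (rule sum_mono) (rule term_le)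
    also have "\<dots> \<le> (\<Sum>\<alpha>\<in>{\<alpha>::'n \<Rightarrow> nat. 2 \<le> mdeg \<alpha> \<and> mdeg \<alpha> \<le> 2}. mweight \<alpha> * (K\<^sup>2 * (?B / W)))"
      using finite_mdeg_between mweight_nonneg bound_nonneg W_ge_two
      by (intro sum_mono2 mult_nonneg_nonneg divide_nonneg_nonneg) auto
    also have "\<dots> = (\<Sum>n=2..2. real CARD('n) ^ n * (K\<^sup>2 * (?B / W)))"
      by (rule sum_mweight_by_mdeg)
    also have "\<dots> = (real CARD('n) * K)\<^sup>2 * ?B / W"
      by (simp add: power_mult_distrib)
    also have "\<dots> \<le> ?B / 4"
    proof -
      have "(real CARD('n) * K)\<^sup>2 * ?B \<le> W / 4 * ?B"
        using W_absorbs_quadratic bound_nonneg by (intro mult_right_mono) auto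
      then show ?thesis using W_ge_two by (simp add: pos_divide_le_eq algebra_simps)
    qed
    finally show ?thesis using False by simp
  qed
qed


lemma higher_degree_terms_le:
  fixes c :: "('n \<Rightarrow> nat) \<Rightarrow> real"
  assumes \<gamma>: "2 \<le> \<gamma> i"
    and IH: "\<And>\<alpha>. \<alpha> \<in> coupled_indices i m \<gamma> \<Longrightarrow>
      \<bar>c (pivot_shift i \<gamma> \<alpha>)\<bar> \<le> bound (pivot_shift i \<gamma> \<alpha>) (mdeg (pivot_shift i \<gamma> \<alpha>) - 2)"
  shows "(\<Sum>\<alpha>\<in>coupled_indices i m \<gamma> - {\<alpha>. mdeg \<alpha> = 2}.
           \<bar>mweight \<alpha> * abar (mdeg \<alpha>) \<alpha> * c (pivot_shift i \<gamma> \<alpha>)\<bar>)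
         \<le> bound \<gamma> (mdeg \<gamma> - 1) / 4"
proof -
  let ?A = "coupled_indices i m \<gamma> - {\<alpha>. mdeg \<alpha> = 2}" and ?B = "bound \<gamma> (mdeg \<gamma> - 1)"
  let ?g = "\<lambda>n. K ^ n * (?B / W ^ (n - 2))"
  have term_le: "\<bar>mweight \<alpha> * abar (mdeg \<alpha>) \<alpha> * c (pivot_shift i \<gamma> \<alpha>)\<bar> \<le> mweight \<alpha> * ?g (mdeg \<alpha>)"
    if \<alpha>: "\<alpha> \<in> ?A" for \<alpha>
  proof -
    let ?\<delta> = "pivot_shift i \<gamma> \<alpha>"
    have "3 \<le> mdeg \<alpha>" "mdeg ?\<delta> + 2 = mdeg \<gamma> + mdeg \<alpha>" "?\<delta> i + 2 \<le> \<gamma> i + mdeg \<alpha>"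
      using \<alpha> \<gamma> mdeg_pivot_shift[of \<gamma> i \<alpha>] mdeg_ge_component[of \<alpha> i]
      by (auto simp: coupled_indices_def pivot_shift_same)
    note shift_le = bound_higher_degree_le[OF this \<gamma>]
    have "\<bar>c ?\<delta>\<bar> * W ^ (mdeg \<alpha> - 2) \<le> bound ?\<delta> (mdeg ?\<delta> - 2) * W ^ (mdeg \<alpha> - 2)"
      using IH \<alpha> W_ge_two by (intro mult_right_mono) auto
    also have "\<dots> \<le> ?B" by (rule shift_le)
    finally have "\<bar>c ?\<delta>\<bar> \<le> ?B / W ^ (mdeg \<alpha> - 2)"
      using W_ge_two by (simp add: le_divide_eq)
    moreover have "\<bar>abar (mdeg \<alpha>) \<alpha>\<bar> \<le> K ^ mdeg \<alpha>" by (rule abar_le)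
    ultimately have "\<bar>abar (mdeg \<alpha>) \<alpha>\<bar> * \<bar>c ?\<delta>\<bar> \<le> ?g (mdeg \<alpha>)"
      using K_nonneg by (intro mult_mono) auto
    from mult_left_mono[OF this mweight_nonneg] show ?thesis
      unfolding abs_mult abs_of_nonneg[OF mweight_nonneg] by (simp only: mult.assoc)
  qed
  have "(\<Sum>\<alpha>\<in>?A. \<bar>mweight \<alpha> * abar (mdeg \<alpha>) \<alpha> * c (pivot_shift i \<gamma> \<alpha>)\<bar>)
      \<le> (\<Sum>\<alpha>\<in>?A. mweight \<alpha> * ?g (mdeg \<alpha>))"
    by (rule sum_mono) (rule term_le)
  also have "\<dots> \<le> (\<Sum>\<alpha>\<in>{\<alpha>::'n \<Rightarrow> nat. 3 \<le> mdeg \<alpha> \<and> mdeg \<alpha> \<le> m + 2}. mweight \<alpha> * ?g (mdeg \<alpha>))"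
    using finite_mdeg_between mweight_nonneg bound_nonneg W_ge_two K_nonneg
    by (intro sum_mono2 mult_nonneg_nonneg divide_nonneg_nonneg)
      (auto simp: coupled_indices_def)
  also have "\<dots> = (\<Sum>n=3..m + 2. real CARD('n) ^ n * ?g n)"
    by (rule sum_mweight_by_mdeg)
  also have "\<dots> = (\<Sum>n=3..m + 2. (real CARD('n) * K) ^ n / W ^ (n - 2)) * ?B"
    unfolding sum_distrib_right by (rule sum.cong) (simp_all add: power_mult_distrib)
  also have "\<dots> \<le> 1/4 * ?B"
    using W_absorbs_higher bound_nonneg by (intro mult_right_mono)
  finally show ?thesis by simp
qed

lemma abs_coef_le_terms:
  assumes \<gamma>: "2 \<le> \<gamma> i" "mdeg \<gamma> \<le> m + 2"
  defines "f \<equiv> \<lambda>\<alpha>. mweight \<alpha> * abar (mdeg \<alpha>) \<alpha> * coef (pivot_shift i \<gamma> \<alpha>)"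
  shows "\<bar>coef \<gamma>\<bar> \<le> pnorm (mdeg \<gamma> - 2)
    + (\<Sum>\<alpha>\<in>coupled_indices i m \<gamma> \<inter> {\<alpha>. mdeg \<alpha> = 2}. \<bar>f \<alpha>\<bar>)
    + (\<Sum>\<alpha>\<in>coupled_indices i m \<gamma> - {\<alpha>. mdeg \<alpha> = 2}. \<bar>f \<alpha>\<bar>)"
proof -
  let ?A = "coupled_indices i m \<gamma>" and ?\<beta> = "\<lambda>j. \<gamma> j - unit2 i j"
  have "\<bar>coef \<gamma>\<bar> \<le> \<bar>- deriv_at_zero p ?\<beta> - (\<Sum>\<alpha>\<in>?A. f \<alpha>)\<bar>"
    unfolding solve_coeff_pivot[OF \<gamma>] abs_divide f_def
    using pivot_ge_one mult_left_mono[OF pivot_ge_one abs_ge_zero] by (simp add: divide_le_eq)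
  also have "\<dots> \<le> pnorm (mdeg \<gamma> - 2) + (\<Sum>\<alpha>\<in>?A. \<bar>f \<alpha>\<bar>)"
  proof -
    have "mdeg ?\<beta> = mdeg \<gamma> - 2" using mdeg_sub_unit2[of \<gamma> i, OF \<gamma>(1)] by simp
    then have "\<bar>deriv_at_zero p ?\<beta>\<bar> \<le> pnorm (mdeg \<gamma> - 2)" using abs_deriv_at_zero_le[of ?\<beta>] by simp
    then show ?thesis using sum_abs[of f ?A] by linarith
  qed
  also have "(\<Sum>\<alpha>\<in>?A. \<bar>f \<alpha>\<bar>)
      = (\<Sum>\<alpha>\<in>?A \<inter> {\<alpha>. mdeg \<alpha> = 2}. \<bar>f \<alpha>\<bar>) + (\<Sum>\<alpha>\<in>?A - {\<alpha>. mdeg \<alpha> = 2}. \<bar>f \<alpha>\<bar>)"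
    by (rule sum.Int_Diff[OF finite_coupled_indices])
  finally show ?thesis by simp
qed

lemma abs_coef_le_bound: "\<bar>coef \<gamma>\<bar> \<le> bound \<gamma> (mdeg \<gamma> - 2)"
proof (induction \<gamma> rule: measure_induct_rule[of "solve_order m i"])
  case (less \<gamma>)
  show ?case
  proof (cases "2 \<le> \<gamma> i \<and> mdeg \<gamma> \<le> m + 2")
    case False
    then show ?thesis using solve_coeff_eq_zero[OF False] bound_nonneg by simp
  next
    case True
    let ?P = "pnorm (mdeg \<gamma> - 2)"
    have \<gamma>: "2 \<le> \<gamma> i" "mdeg \<gamma> \<le> m + 2" "2 \<le> mdeg \<gamma>"
      using True mdeg_ge_component[of \<gamma> i] by auto
    have IH: "\<bar>coef (pivot_shift i \<gamma> \<alpha>)\<bar> \<le> bound (pivot_shift i \<gamma> \<alpha>) (mdeg (pivot_shift i \<gamma> \<alpha>) - 2)"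
      if "\<alpha> \<in> coupled_indices i m \<gamma>" for \<alpha>
      using less solve_order_pivot_shift_less[OF \<gamma>(1,2) that] by blast
    have estimate: "\<bar>coef \<gamma>\<bar> \<le> ?P + (if \<gamma> i = 2 then 0 else bound \<gamma> (mdeg \<gamma> - 2) / 4)
        + bound \<gamma> (mdeg \<gamma> - 1) / 4"
      using abs_coef_le_terms[OF \<gamma>(1,2)] same_degree_terms_le[OF \<gamma>(1) IH]
        higher_degree_terms_le[OF \<gamma>(1) IH] by linarith
    have split: "bound \<gamma> (mdeg \<gamma> - 2) = W ^ (\<gamma> i - 2) * ?P + bound \<gamma> (mdeg \<gamma> - 1)"
      by (rule bound_split[OF \<gamma>(3,2)])
    have P_nonneg: "0 \<le> ?P" and tail_nonneg: "0 \<le> bound \<gamma> (mdeg \<gamma> - 1)"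
      by (rule tnorm_nonneg, rule bound_nonneg)
    show ?thesis
    proof (cases "\<gamma> i = 2")
      case True
      then show ?thesis using estimate split tail_nonneg by simp
    next
      case False
      have "W ^ 1 \<le> W ^ (\<gamma> i - 2)" using False \<gamma>(1) W_ge_two by (intro power_increasing) auto
      then have "2 * ?P \<le> W ^ (\<gamma> i - 2) * ?P" using W_ge_two P_nonneg by (intro mult_right_mono) auto
      moreover have "\<bar>coef \<gamma>\<bar> \<le> ?P + bound \<gamma> (mdeg \<gamma> - 2) / 4 + bound \<gamma> (mdeg \<gamma> - 1) / 4"
        using estimate False by simp
      ultimately show ?thesis unfolding split using tail_nonneg P_nonneg by argo
    qed
  qed
qed

lemma abs_coef_le_geometric:
  assumes "mdeg \<alpha> = n + 2"
  shows "\<bar>coef \<alpha>\<bar> \<le> (\<Sum>k=n..m. W ^ (2 * k) * pnorm k)"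
proof -
  have "\<bar>coef \<alpha>\<bar> \<le> bound \<alpha> (mdeg \<alpha> - 2)" by (rule abs_coef_le_bound)
  also have "\<dots> \<le> (\<Sum>k=n..m. W ^ (2 * k) * pnorm k)"
    unfolding majorant_def assms add_diff_cancel_right'
    using mdeg_ge_component[of \<alpha> i] assms W_ge_two
    by (intro sum_mono mult_right_mono tnorm_nonneg power_increasing) auto
  finally show ?thesis .
qed

lemma tnorm_grad_solve_poly_le:
  assumes "n \<le> m"
  shows "tnorm (n + 2) (grad_at (n + 2) (solve_poly abar p m i) 0)
    \<le> (\<Sum>k=n..m. (real CARD('n) ^ 3 * W\<^sup>2) ^ k * pnorm k)"
proof -
  let ?d = "real CARD('n)" and ?G = "grad_at (n + 2) (solve_poly abar p m i) 0"
  let ?B = "\<Sum>k=n..m. W ^ (2 * k) * pnorm k"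
  have d_ge_one: "1 \<le> ?d" by (simp add: Suc_leI)
  have entry_le: "\<bar>?G \<alpha>\<bar> \<le> ?B" if "mdeg \<alpha> = n + 2" for \<alpha>
    using abs_coef_le_geometric[OF that] that by (simp add: grad_solve_poly)
  text \<open>For n = 0 only the entry at 2e_i is nonzero, which avoids the factor d^2.\<close>
  obtain e where e: "e \<le> 3 * n" "tnorm (n + 2) ?G \<le> ?d ^ e * ?B"
  proof (cases "n = 0")
    case True
    have off_pivot: "?G \<alpha> = 0" if "mdeg \<alpha> = n + 2" "\<alpha> \<noteq> unit2 i" for \<alpha>
    proof -
      have "\<alpha> i \<le> 1" using component_le_one_if_mdeg_two[of \<alpha> i] that True by simp
      then show ?thesis using solve_coeff_eq_zero[of \<alpha> i m] by (simp add: grad_solve_poly)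
    qed
    have "tnorm (n + 2) ?G = sqrt (mweight (unit2 i)) * \<bar>?G (unit2 i)\<bar>"
      using True mdeg_unit2[of i] by (intro tnorm_single_entry off_pivot) auto
    also have "\<dots> \<le> ?d ^ 0 * ?B" using entry_le mdeg_unit2[of i] True by (simp add: mweight_unit2)
    finally show thesis using that[of 0] by simp
  next
    case False
    have "tnorm (n + 2) ?G \<le> ?d ^ (n + 2) * ?B"
      using entry_le W_ge_two by (intro tnorm_le_entry_bound sum_nonneg mult_nonneg_nonneg tnorm_nonneg) auto
    then show thesis using that[of "n + 2"] False by simp
  qed
  note e(2)
  also have "?d ^ e * ?B = (\<Sum>k=n..m. ?d ^ e * W ^ (2 * k) * pnorm k)"
    by (simp add: sum_distrib_left mult.assoc)
  also have "\<dots> \<le> (\<Sum>k=n..m. (?d ^ 3 * W\<^sup>2) ^ k * pnorm k)"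
  proof (intro sum_mono mult_right_mono tnorm_nonneg)
    fix k assume "k \<in> {n..m}"
    then have "?d ^ e \<le> ?d ^ (3 * k)" using d_ge_one e(1) by (intro power_increasing) auto
    then have "?d ^ e * W ^ (2 * k) \<le> ?d ^ (3 * k) * W ^ (2 * k)"
      by (rule mult_right_mono) (use W_ge_two in simp)
    then show "?d ^ e * W ^ (2 * k) \<le> (?d ^ 3 * W\<^sup>2) ^ k"
      by (simp only: power_mult power_mult_distrib)
  qed
  finally show ?thesis .
qed

end

definition absorbing_weight :: "real \<Rightarrow> real" where
  "absorbing_weight D = (8 * (D + 1)) ^ 3"

lemma absorbing_weight_ge_two: "0 \<le> D \<Longrightarrow> 2 \<le> absorbing_weight D"
  unfolding absorbing_weight_def
  using power_mono[of 8 "8 * (D + 1)" 3] by simp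

lemma quadratic_le_absorbing_weight:
  assumes "0 \<le> D"
  shows "4 * D\<^sup>2 \<le> absorbing_weight D"
proof -
  have "D\<^sup>2 \<le> (D + 1)\<^sup>2" using assms by (intro power_mono) auto
  also have "\<dots> \<le> (D + 1) ^ 3" using assms by (intro power_increasing) auto
  finally have "D\<^sup>2 \<le> (D + 1) ^ 3" .
  moreover have "0 \<le> (D + 1) ^ 3" using assms by simp
  ultimately have "4 * D\<^sup>2 \<le> 512 * (D + 1) ^ 3" by linarith
  then show ?thesis
    unfolding absorbing_weight_def power_mult_distrib by simp
qed

lemma higher_order_sum_le_quarter:
  assumes "0 \<le> D"
  shows "(\<Sum>n=3..N. D ^ n / absorbing_weight D ^ (n - 2)) \<le> 1/4"
proof -
  have "(\<Sum>n=3..N. D ^ n / absorbing_weight D ^ (n - 2)) \<le> (\<Sum>n=3..N. (1/8 :: real) ^ n)"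
  proof (rule sum_mono)
    fix n assume n: "n \<in> {3..N}"
    have "(8 * (D + 1)) ^ n \<le> (8 * (D + 1)) ^ (3 * (n - 2))"
      using n assms by (intro power_increasing) auto
    then have "D ^ n / absorbing_weight D ^ (n - 2) \<le> (D + 1) ^ n / (8 * (D + 1)) ^ n"
      unfolding absorbing_weight_def power_mult[symmetric]
      using assms by (intro frac_le power_mono) auto
    also have "\<dots> = ((D + 1) / (8 * (D + 1))) ^ n"
      by (simp add: power_divide)
    also have "(D + 1) / (8 * (D + 1)) = 1/8"
      using assms by (simp add: field_simps)
    finally show "D ^ n / absorbing_weight D ^ (n - 2) \<le> (1/8) ^ n" .
  qed
  also have "\<dots> \<le> 1/4"
  proof (cases "N < 3")
    case False
    then have "(\<Sum>n=3..N. (1/8 :: real) ^ n) = ((1/8) ^ 3 - (1/8) ^ Suc N) / (1 - 1/8)"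
      by (subst sum_gp) auto
    also have "\<dots> \<le> (1/8) ^ 3 / (1 - 1/8)" by (intro divide_right_mono) auto
    also have "\<dots> \<le> 1/4" by (simp add: power3_eq_cube)
    finally show ?thesis .
  qed simp
  finally show ?thesis .
qed

lemma pivot_ge_one_if_unif_elliptic:
  assumes "unif_elliptic \<Lambda> (tmat T)"
  shows "1 \<le> T (unit2 (i::'n::finite))"
proof -
  have "axis i 1 $ k * tmat T k j * axis i 1 $ j = (if k = i then if j = i then tmat T k j else 0 else 0)"
    for k j by (simp add: axis_def)
  moreover have "(\<Sum>j\<in>UNIV. if k = i then if j = i then tmat T k j else 0 else 0)
      = (if k = i then tmat T i i else 0)" for k
    by (cases "k = i") (simp_all add: sum.delta)
  ultimately have "bilin (tmat T) (axis i 1) (axis i 1) = tmat T i i"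
    unfolding bilin_def by simp
  then show ?thesis
    using assms unfolding unif_elliptic_def by (auto simp: tmat_def unit2_def dest: spec[of _ "axis i 1"])
qed

theorem lemma2p3:
  fixes \<Lambda> K :: real
  assumes "\<Lambda> \<ge> 1"
  shows "\<exists>C::real. \<forall>abar :: nat \<Rightarrow> ('n::finite \<Rightarrow> nat) \<Rightarrow> real.
    unif_elliptic \<Lambda> (tmat (abar 2)) \<and> (\<forall>k. tnorm k (abar k) \<le> K ^ k) \<longrightarrow>
    (\<forall>m p. in_P m p \<longrightarrow>
      (\<exists>q. in_P (m + 2) q
         \<and> (\<forall>x. - peval (hom_op abar q) x = peval p x)
         \<and> peval q 0 = 0
         \<and> (\<forall>\<alpha>. mdeg \<alpha> = 1 \<longrightarrow> peval (pderivm \<alpha> q) 0 = 0)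
         \<and> (\<forall>n \<le> m. tnorm (n + 2) (grad_at (n + 2) q 0)
               \<le> (\<Sum>k = n..m. C ^ k * tnorm k (grad_at k p 0)))))"
proof -
  define W where "W = absorbing_weight (real CARD('n) * \<bar>K\<bar>)"
  show ?thesis
  proof (intro exI[of _ "real CARD('n) ^ 3 * W\<^sup>2"] allI impI)
    fix abar :: "nat \<Rightarrow> ('n \<Rightarrow> nat) \<Rightarrow> real" and m and p :: "('n \<Rightarrow> nat) \<Rightarrow> real"
    assume abar: "unif_elliptic \<Lambda> (tmat (abar 2)) \<and> (\<forall>k. tnorm k (abar k) \<le> K ^ k)"
      and "in_P m p"
    have "\<bar>abar (mdeg \<alpha>) \<alpha>\<bar> \<le> \<bar>K\<bar> ^ mdeg \<alpha>" for \<alpha>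
      using abs_le_tnorm[of \<alpha> "mdeg \<alpha>" "abar (mdeg \<alpha>)"] abar power_abs[of K] abs_ge_self
      by (metis order_trans)
    moreover have "1 \<le> abar 2 (unit2 undefined)"
      using abar pivot_ge_one_if_unif_elliptic by blast
    ultimately interpret pivot_bounds abar p m undefined "\<bar>K\<bar>" W
      using \<open>in_P m p\<close> absorbing_weight_ge_two quadratic_le_absorbing_weight
        higher_order_sum_le_quarter
      by unfold_locales (auto simp: W_def)
    show "\<exists>q. in_P (m + 2) q \<and> (\<forall>x. - peval (hom_op abar q) x = peval p x) \<and> peval q 0 = 0
        \<and> (\<forall>\<alpha>. mdeg \<alpha> = 1 \<longrightarrow> peval (pderivm \<alpha> q) 0 = 0)
        \<and> (\<forall>n \<le> m. tnorm (n + 2) (grad_at (n + 2) q 0)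
              \<le> (\<Sum>k = n..m. (real CARD('n) ^ 3 * W\<^sup>2) ^ k * tnorm k (grad_at k p 0)))"
      using solve_poly_in_P hom_op_solve_poly peval_solve_poly_zero pderivm_solve_poly_zero
        tnorm_grad_solve_poly_le
      by (intro exI[of _ "solve_poly abar p m undefined"]) (simp add: peval_uminus)
  qed
qed

end
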